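(* Let $X$ be a Banach space, $H$ a Hilbert space, $T\in\mathcal L(X,H)$, $f\in H$, $J$ a seminorm on $X$ such that all Tikhonov functionals below have minimizers, and $(\lambda_k)\subset(0,\infty)$. Let $x_k$ be the MHDM iterates and $x_{\lambda_k}$ any minimizer of $x\mapsto\frac{\lambda_k}{2}\|Tx-f\|^2+J(x)$. Then for every $k\in\mathbb N_0$, $$|T^*T(x_{\lambda_k}-x_k)|_*\le\frac{2}{\lambda_k}.$$
   Context: Seminorm: $J:X\to[0,\infty]$ with $J(\alpha x)=|\alpha|J(x)$, $J(x+y)\le J(x)+J(y)$. Dual seminorm: for $x^*\in X^*$, $|x^*|_*=\sup_{J(x)\ne0}\langle x^*,x/J(x)\rangle$, with the convention $x/J(x)=0$ if $J(x)=\infty$. MHDM: $x_0\in\arg\min_x\frac{\lambda_0}{2}\|Tx-f\|^2+J(x)$, and for $k\ge1$, $x_k\in\arg\min_x\frac{\lambda_k}{2}\|Tx-f\|^2+J(x-x_{k-1})$ (equivalently $x_k=x_{k-1}+u_k$ with $u_k\in\arg\min_u\frac{\lambda_k}{2}\|f-Tx_{k-1}-Tu\|^2+J(u)$). *)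

theory Defs
  imports "HOL-Analysis.Analysis" "HOL-Library.Extended_Nonnegative_Real" "HOL-Library.Extended_Real"
begin

definition is_seminorm :: "('a::real_vector \<Rightarrow> ennreal) \<Rightarrow> bool" where
  "is_seminorm J \<longleftrightarrow>
     (\<forall>\<alpha>::real. \<forall>x. J (\<alpha> *\<^sub>R x) = ennreal \<bar>\<alpha>\<bar> * J x) \<and>
     (\<forall>x y. J (x + y) \<le> J x + J y)"

definition dual_seminorm :: "('a::real_vector \<Rightarrow> ennreal) \<Rightarrow> ('a \<Rightarrow> real) \<Rightarrow> ereal" where
  "dual_seminorm J \<phi> =
     (SUP x \<in> {x. J x \<noteq> 0}.
        ereal (if J x = \<infinity> then 0 else \<phi> x / enn2real (J x)))"

definition tikh :: "('a \<Rightarrow> 'b::real_normed_vector) \<Rightarrow> ('a::real_vector \<Rightarrow> ennreal)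
    \<Rightarrow> real \<Rightarrow> 'b \<Rightarrow> 'a \<Rightarrow> 'a \<Rightarrow> ennreal" where
  "tikh T J lam f c x = ennreal (lam / 2 * (norm (T x - f))\<^sup>2) + J (x - c)"

definition is_minimizer :: "('a \<Rightarrow> ennreal) \<Rightarrow> 'a \<Rightarrow> bool" where
  "is_minimizer F x \<longleftrightarrow> (\<forall>y. F x \<le> F y)"

definition MHDM_iterates :: "('a \<Rightarrow> 'b::real_normed_vector) \<Rightarrow> ('a::real_vector \<Rightarrow> ennreal)
    \<Rightarrow> (nat \<Rightarrow> real) \<Rightarrow> 'b \<Rightarrow> (nat \<Rightarrow> 'a) \<Rightarrow> bool" where
  "MHDM_iterates T J lam f xs \<longleftrightarrow>
     is_minimizer (tikh T J (lam 0) f 0) (xs 0) \<and>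
     (\<forall>k. is_minimizer (tikh T J (lam (Suc k)) f (xs k)) (xs (Suc k)))"

end

theory Submission
  imports Defs
begin

text \<open>Testing the minimality of a Tikhonov minimizer \<open>z\<close> against \<open>z + t v\<close> and letting
  \<open>t \<rightarrow> 0\<^sup>+\<close> gives the variational inequality \<open>\<lambda> \<langle>f - T z, T v\<rangle> \<le> J v\<close>, whatever the centre
  of the penalty. Applying it to \<open>x\<^sub>k\<close> with direction \<open>v\<close> and to \<open>x\<^sub>\<lambda>\<^sub>k\<close> with direction \<open>-v\<close> and
  adding, the residual \<open>f\<close> cancels and \<open>\<lambda>\<^sub>k \<langle>T(x\<^sub>\<lambda>\<^sub>k - x\<^sub>k), T v\<rangle> \<le> 2 J v\<close>.\<close>

lemma nonneg_if_nonneg_linear_pos: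
  fixes c d :: real
  assumes "\<And>t. t > 0 \<Longrightarrow> 0 \<le> c + t * d"
  shows "0 \<le> c"
proof (rule ccontr)
  assume "\<not> 0 \<le> c"
  define t where "t = - c / (2 * (\<bar>d\<bar> + 1))"
  have "t > 0" using \<open>\<not> 0 \<le> c\<close> unfolding t_def by (intro divide_pos_pos) auto
  have "t * \<bar>d\<bar> \<le> - c / 2"
    using \<open>\<not> 0 \<le> c\<close> unfolding t_def by (simp add: field_simps)
  moreover have "t * d \<le> t * \<bar>d\<bar>" using \<open>t > 0\<close> by (simp add: mult_left_mono)
  ultimately show False using assms[OF \<open>t > 0\<close>] \<open>\<not> 0 \<le> c\<close> by linarith
qed

lemma power2_norm_add_scaleR:
  fixes u w :: "'a::real_inner"
  shows "(norm (u + t *\<^sub>R w))\<^sup>2 = (norm u)\<^sup>2 + 2 * t * inner u w + t\<^sup>2 * (norm w)\<^sup>2"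
  unfolding power2_norm_eq_inner
  by (simp add: inner_add_left inner_add_right inner_commute[of w u] power2_eq_square algebra_simps)

lemma is_seminorm_zero: "is_seminorm J \<Longrightarrow> J 0 = 0"
  unfolding is_seminorm_def by (metis abs_zero ennreal_0 mult_zero_left scaleR_zero_left)

lemma is_seminorm_minus: "is_seminorm J \<Longrightarrow> J (- x) = J x"
  unfolding is_seminorm_def by (metis abs_neg_one ennreal_1 mult_1 scaleR_minus1_left)

lemma MHDM_iterates_minimizer:
  "MHDM_iterates T J lam f xs \<Longrightarrow> \<exists>c. is_minimizer (tikh T J (lam k) f c) (xs k)"
  unfolding MHDM_iterates_def by (cases k) auto

lemma tikh_minimizer_penalty_finite:
  assumes "is_minimizer (tikh T J lam f c) z" and "J (y - c) \<noteq> \<infinity>"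
  shows "J (z - c) \<noteq> \<infinity>"
proof -
  have "tikh T J lam f c z \<le> tikh T J lam f c y"
    using assms(1) unfolding is_minimizer_def by blast
  moreover have "tikh T J lam f c y < \<infinity>"
    using assms(2) unfolding tikh_def by (simp add: less_top)
  ultimately show ?thesis unfolding tikh_def by (auto simp: top_unique)
qed

lemma tikh_minimizer_real_le:
  assumes "is_minimizer (tikh T J lam f c) z" and "lam \<ge> 0" and "J (y - c) \<noteq> \<infinity>"
  shows "lam / 2 * (norm (T z - f))\<^sup>2 + enn2real (J (z - c))
       \<le> lam / 2 * (norm (T y - f))\<^sup>2 + enn2real (J (y - c))"
proof -
  have "J (z - c) \<noteq> \<infinity>" using tikh_minimizer_penalty_finite[OF assms(1,3)] .
  then have "ennreal (lam / 2 * (norm (T z - f))\<^sup>2 + enn2real (J (z - c)))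
      = tikh T J lam f c z"
    unfolding tikh_def using \<open>lam \<ge> 0\<close> by (simp add: ennreal_plus less_top)
  also have "\<dots> \<le> tikh T J lam f c y"
    using assms(1) unfolding is_minimizer_def by blast
  also have "\<dots> = ennreal (lam / 2 * (norm (T y - f))\<^sup>2 + enn2real (J (y - c)))"
    unfolding tikh_def using \<open>lam \<ge> 0\<close> assms(3) by (simp add: ennreal_plus less_top)
  finally show ?thesis
    using \<open>lam \<ge> 0\<close> by (subst (asm) ennreal_le_iff) auto
qed

lemma tikh_minimizer_variational_ineq:
  fixes T :: "'a::real_vector \<Rightarrow> 'b::real_inner"
  assumes T: "linear T" and J: "is_seminorm J" and "lam > 0"
    and min: "is_minimizer (tikh T J lam f c) z" and "J v \<noteq> \<infinity>"
  shows "lam * inner (f - T z) (T v) \<le> enn2real (J v)"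
proof -
  define a where "a = inner (T z - f) (T v)"
  define R where "R = enn2real (J (z - c))"
  define jv where "jv = enn2real (J v)"
  have "J (z - c) \<noteq> \<infinity>"
    using tikh_minimizer_penalty_finite[OF min, of c] is_seminorm_zero[OF J] by simp
  then have R: "J (z - c) = ennreal R" "R \<ge> 0"
    unfolding R_def by (simp_all add: less_top)
  have jv: "J v = ennreal jv" "jv \<ge> 0"
    using \<open>J v \<noteq> \<infinity>\<close> unfolding jv_def by (simp_all add: less_top)
  have "0 \<le> (lam * a + jv) + t * (lam / 2 * (norm (T v))\<^sup>2)" if "t > 0" for t
  proof -
    have "J (z + t *\<^sub>R v - c) = J ((z - c) + t *\<^sub>R v)" by (simp add: algebra_simps)
    also have "\<dots> \<le> J (z - c) + J (t *\<^sub>R v)"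
      using J unfolding is_seminorm_def by blast
    also have "J (t *\<^sub>R v) = ennreal t * J v"
      using J \<open>t > 0\<close> unfolding is_seminorm_def by simp
    finally have "J (z + t *\<^sub>R v - c) \<le> ennreal (R + t * jv)"
      using R jv \<open>t > 0\<close> by (simp add: ennreal_plus ennreal_mult)
    then have Jt: "J (z + t *\<^sub>R v - c) \<noteq> \<infinity>"
      and Jt': "enn2real (J (z + t *\<^sub>R v - c)) \<le> R + t * jv"
      using R jv \<open>t > 0\<close> by (auto simp: top_unique enn2real_leI)
    have "T (z + t *\<^sub>R v) - f = (T z - f) + t *\<^sub>R T v"
      using T by (simp add: linear_add linear_scale algebra_simps)
    then have "(norm (T (z + t *\<^sub>R v) - f))\<^sup>2
        = (norm (T z - f))\<^sup>2 + 2 * t * a + t\<^sup>2 * (norm (T v))\<^sup>2"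
      unfolding a_def by (simp only: power2_norm_add_scaleR)
    with tikh_minimizer_real_le[OF min _ Jt] Jt' \<open>lam > 0\<close>
    have "lam / 2 * (norm (T z - f))\<^sup>2 + R
        \<le> lam / 2 * ((norm (T z - f))\<^sup>2 + 2 * t * a + t\<^sup>2 * (norm (T v))\<^sup>2) + (R + t * jv)"
      unfolding R_def by simp
    moreover have "t * ((lam * a + jv) + t * (lam / 2 * (norm (T v))\<^sup>2))
        = lam / 2 * ((norm (T z - f))\<^sup>2 + 2 * t * a + t\<^sup>2 * (norm (T v))\<^sup>2) + (R + t * jv)
          - (lam / 2 * (norm (T z - f))\<^sup>2 + R)"
      by (simp add: algebra_simps power2_eq_square)
    ultimately have "0 \<le> t * ((lam * a + jv) + t * (lam / 2 * (norm (T v))\<^sup>2))"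
      by linarith
    with \<open>t > 0\<close> show ?thesis by (simp add: zero_le_mult_iff)
  qed
  then have "0 \<le> lam * a + jv" by (rule nonneg_if_nonneg_linear_pos)
  moreover have "inner (f - T z) (T v) = - a" unfolding a_def by (simp add: inner_diff_left)
  ultimately show ?thesis unfolding jv_def by simp
qed

lemma tikh_minimizers_inner_diff_le:
  fixes T :: "'a::real_vector \<Rightarrow> 'b::real_inner"
  assumes T: "linear T" and J: "is_seminorm J" and "lam > 0"
    and "is_minimizer (tikh T J lam f c) z" and "is_minimizer (tikh T J lam f d) w"
    and "J v \<noteq> \<infinity>"
  shows "lam * inner (T (z - w)) (T v) \<le> 2 * enn2real (J v)"
proof -
  have "lam * inner (f - T w) (T v) \<le> enn2real (J v)"
    using tikh_minimizer_variational_ineq[OF T J assms(3,5,6)] .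
  moreover have "lam * inner (f - T z) (T (- v)) \<le> enn2real (J v)"
    using tikh_minimizer_variational_ineq[OF T J assms(3,4), of "- v"] assms(6)
    by (simp add: is_seminorm_minus[OF J])
  moreover have "inner (T (z - w)) (T v) = inner (f - T w) (T v) - inner (f - T z) (T v)"
    and "T (- v) = - T v"
    using T by (simp_all add: linear_diff linear_neg inner_diff_left)
  ultimately show ?thesis by (simp add: right_diff_distrib)
qed

lemma dual_seminorm_le:
  assumes "C \<ge> 0" and "\<And>x. J x \<noteq> 0 \<Longrightarrow> J x \<noteq> \<infinity> \<Longrightarrow> \<phi> x \<le> C * enn2real (J x)"
  shows "dual_seminorm J \<phi> \<le> ereal C"
  unfolding dual_seminorm_def
proof (rule SUP_least)
  fix x assume "x \<in> {x. J x \<noteq> 0}"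
  moreover have "enn2real (J x) > 0" if "J x \<noteq> 0" "J x \<noteq> \<infinity>"
    using that by (simp add: enn2real_positive_iff less_top[symmetric] zero_less_iff_neq_zero)
  ultimately show "ereal (if J x = \<infinity> then 0 else \<phi> x / enn2real (J x)) \<le> ereal C"
    using assms by (auto simp: divide_le_eq)
qed

theorem mainTheorem9:
  fixes T :: "'a::banach \<Rightarrow> 'b::{real_inner, complete_space}"
    and J :: "'a \<Rightarrow> ennreal"
    and f :: 'b
    and lam :: "nat \<Rightarrow> real"
    and xs :: "nat \<Rightarrow> 'a"
    and z :: 'a
    and k :: nat
  assumes "bounded_linear T"
    and "is_seminorm J"
    and "\<forall>n. lam n > 0"
    and "MHDM_iterates T J lam f xs"
    and "is_minimizer (tikh T J (lam k) f 0) z"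
  shows "dual_seminorm J (\<lambda>x. inner (T (z - xs k)) (T x)) \<le> ereal (2 / lam k)"
proof (rule dual_seminorm_le)
  have "lam k > 0" using assms(3) by blast
  then show "2 / lam k \<ge> 0" by simp
  obtain c where "is_minimizer (tikh T J (lam k) f c) (xs k)"
    using MHDM_iterates_minimizer[OF assms(4)] by blast
  fix x assume "J x \<noteq> \<infinity>"
  with tikh_minimizers_inner_diff_le[OF bounded_linear.linear[OF assms(1)] assms(2)
      \<open>lam k > 0\<close> assms(5) \<open>is_minimizer _ (xs k)\<close>]
  show "inner (T (z - xs k)) (T x) \<le> 2 / lam k * enn2real (J x)"
    using \<open>lam k > 0\<close> by (simp add: field_simps)
qed

end
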